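(* Fix $\eta>0$, $\lambda\in\mathbb{R}^{2md}$, $e\in E$, $i\in e$, and let $\lambda'$ be obtained from $\lambda$ by replacing only the block $\lambda_{e,i}$ with $\lambda'_{e,i}(x)=\lambda_{e,i}(x)+\frac{1}{2\eta}\log\frac{S^\lambda_{e,i}(x)}{\mu^\lambda_i(x)}$ ($x\in\chi$). Then $$L(\lambda)-L(\lambda')\ \ge\ \frac{1}{4\eta}\|\nu^\lambda_{e,i}\|_1^2.$$
   Context: Let $G=(V,E)$ be a finite undirected graph with $n=|V|$, $m=|E|$, every vertex incident to at least one edge; $N_i=\{e\in E:i\in e\}$. $\chi$ is a finite label set with $d=|\chi|\ge2$. Costs $C_i\in\mathbb{R}^\chi$, $C_e\in\mathbb{R}^{\chi^2}$; for $e=\{i,j\}$, $x_e=(x_i,x_j)$ and $(x_e)_i=x_i$. Dual variables $\lambda=(\lambda_{e,i}(x))_{e\in E,i\in e,x\in\chi}\in\mathbb{R}^{2md}$ and $$L(\lambda)=\frac1\eta\sum_{i\in V}\log\sum_{x\in\chi}\exp\Big(-\eta C_i(x)+\eta\sum_{e\in N_i}\lambda_{e,i}(x)\Big)+\frac1\eta\sum_{e\in E}\log\sum_{x_e\in\chi^2}\exp\Big(-\eta C_e(x_e)-\eta\sum_{i\in e}\lambda_{e,i}((x_e)_i)\Big).$$ $\mu^\lambda_i(x)\propto\exp(-\eta C_i(x)+\eta\sum_{e\in N_i}\lambda_{e,i}(x))$, $\mu^\lambda_e(x_e)\propto\exp(-\eta C_e(x_e)-\eta\sum_{i\in e}\lambda_{e,i}((x_e)_i))$,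 each normalized to sum to $1$; $S^\lambda_{e,i}(x)=\sum_{x_e:(x_e)_i=x}\mu^\lambda_e(x_e)$; the slack vector is $\nu^\lambda_{e,i}=S^\lambda_{e,i}-\mu^\lambda_i\in\mathbb{R}^\chi$ (so $\partial L/\partial\lambda_{e,i}(x)=-\nu^\lambda_{e,i}(x)$). *)

theory Defs
  imports "HOL-Analysis.Analysis"
begin

text \<open>Graph: vertex set V, edges are 2-element subsets of V. Labels: a finite type 'x.
  A joint label x_e of edge e is a function e \<rightarrow> 'x (extensional), so (x_e)_i = x_e i.\<close>

definition graph_ok :: "'v set \<Rightarrow> 'v set set \<Rightarrow> bool" where
  "graph_ok V E \<longleftrightarrow> finite V \<and> (\<forall>e\<in>E. e \<subseteq> V \<and> card e = 2) \<and> (\<forall>i\<in>V. \<exists>e\<in>E. i \<in> e)"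

definition incident :: "'v set set \<Rightarrow> 'v \<Rightarrow> 'v set set" where
  "incident E i = {e\<in>E. i \<in> e}"

definition labelings :: "'v set \<Rightarrow> ('v \<Rightarrow> 'x) set" where
  "labelings e = PiE e (\<lambda>_. UNIV)"

definition node_pot :: "real \<Rightarrow> 'v set set \<Rightarrow> ('v \<Rightarrow> 'x \<Rightarrow> real)
    \<Rightarrow> ('v set \<Rightarrow> 'v \<Rightarrow> 'x \<Rightarrow> real) \<Rightarrow> 'v \<Rightarrow> 'x \<Rightarrow> real" where
  "node_pot \<eta> E Ci lam i x = exp (- \<eta> * Ci i x + \<eta> * (\<Sum>e\<in>incident E i. lam e i x))"

definition edge_pot :: "real \<Rightarrow> ('v set \<Rightarrow> ('v \<Rightarrow> 'x) \<Rightarrow> real)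
    \<Rightarrow> ('v set \<Rightarrow> 'v \<Rightarrow> 'x \<Rightarrow> real) \<Rightarrow> 'v set \<Rightarrow> ('v \<Rightarrow> 'x) \<Rightarrow> real" where
  "edge_pot \<eta> Ce lam e xe = exp (- \<eta> * Ce e xe - \<eta> * (\<Sum>i\<in>e. lam e i (xe i)))"

definition dualL :: "real \<Rightarrow> 'v set \<Rightarrow> 'v set set \<Rightarrow> ('v \<Rightarrow> 'x::finite \<Rightarrow> real)
    \<Rightarrow> ('v set \<Rightarrow> ('v \<Rightarrow> 'x) \<Rightarrow> real) \<Rightarrow> ('v set \<Rightarrow> 'v \<Rightarrow> 'x \<Rightarrow> real) \<Rightarrow> real" where
  "dualL \<eta> V E Ci Ce lam =
     (1/\<eta>) * (\<Sum>i\<in>V. ln (\<Sum>x\<in>UNIV. node_pot \<eta> E Ci lam i x))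
   + (1/\<eta>) * (\<Sum>e\<in>E. ln (\<Sum>xe\<in>labelings e. edge_pot \<eta> Ce lam e xe))"

definition mu_node :: "real \<Rightarrow> 'v set set \<Rightarrow> ('v \<Rightarrow> 'x::finite \<Rightarrow> real)
    \<Rightarrow> ('v set \<Rightarrow> 'v \<Rightarrow> 'x \<Rightarrow> real) \<Rightarrow> 'v \<Rightarrow> 'x \<Rightarrow> real" where
  "mu_node \<eta> E Ci lam i x = node_pot \<eta> E Ci lam i x / (\<Sum>y\<in>UNIV. node_pot \<eta> E Ci lam i y)"

definition mu_edge :: "real \<Rightarrow> ('v set \<Rightarrow> ('v \<Rightarrow> 'x) \<Rightarrow> real)
    \<Rightarrow> ('v set \<Rightarrow> 'v \<Rightarrow> 'x \<Rightarrow> real) \<Rightarrow> 'v set \<Rightarrow> ('v \<Rightarrow> 'x) \<Rightarrow> real" where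
  "mu_edge \<eta> Ce lam e xe = edge_pot \<eta> Ce lam e xe / (\<Sum>ye\<in>labelings e. edge_pot \<eta> Ce lam e ye)"

definition marg :: "real \<Rightarrow> ('v set \<Rightarrow> ('v \<Rightarrow> 'x) \<Rightarrow> real)
    \<Rightarrow> ('v set \<Rightarrow> 'v \<Rightarrow> 'x \<Rightarrow> real) \<Rightarrow> 'v set \<Rightarrow> 'v \<Rightarrow> 'x \<Rightarrow> real" where
  "marg \<eta> Ce lam e i x = (\<Sum>xe\<in>{xe\<in>labelings e. xe i = x}. mu_edge \<eta> Ce lam e xe)"

definition slack :: "real \<Rightarrow> 'v set set \<Rightarrow> ('v \<Rightarrow> 'x::finite \<Rightarrow> real)
    \<Rightarrow> ('v set \<Rightarrow> ('v \<Rightarrow> 'x) \<Rightarrow> real)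
    \<Rightarrow> ('v set \<Rightarrow> 'v \<Rightarrow> 'x \<Rightarrow> real) \<Rightarrow> 'v set \<Rightarrow> 'v \<Rightarrow> 'x \<Rightarrow> real" where
  "slack \<eta> E Ci Ce lam e i x = marg \<eta> Ce lam e i x - mu_node \<eta> E Ci lam i x"

end

theory Submission
  imports Defs
begin

text \<open>Shifting the block \<open>\<lambda>\<^sub>e\<^sub>,\<^sub>i\<close> by \<open>d\<close> multiplies the node potential of \<open>i\<close> by \<open>exp (\<eta> d x)\<close> and
  the edge potential of \<open>e\<close> by \<open>exp (-\<eta> d (x\<^sub>e i))\<close>, leaving all other potentials unchanged. So
  \<open>L\<close> drops by \<open>-(1/\<eta>)\<close> times the logarithms of two expectations, one under \<open>\<mu>\<^sub>i\<close> and one under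
  \<open>\<mu>\<^sub>e\<close>. For the step \<open>d = ln (S/\<mu>\<^sub>i) / (2\<eta>)\<close> both expectations equal the Bhattacharyya
  coefficient \<open>B = \<Sum> sqrt (S x \<mu>\<^sub>i x)\<close>, so \<open>L(\<lambda>) - L(\<lambda>') = -2 ln B / \<eta>\<close>, and
  \<open>\<parallel>S - \<mu>\<^sub>i\<parallel>\<^sub>1\<^sup>2 \<le> 4 (1 - B\<^sup>2) \<le> -8 ln B\<close> by Cauchy-Schwarz.\<close>

definition bhattacharyya :: "('a \<Rightarrow> real) \<Rightarrow> ('a \<Rightarrow> real) \<Rightarrow> 'a set \<Rightarrow> real" where
  "bhattacharyya p q A = (\<Sum>x\<in>A. sqrt (p x * q x))"

lemma l1_dist_sq_le_bhattacharyya: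
  fixes p q :: "'a \<Rightarrow> real"
  assumes "finite A" and p_pos: "\<And>x. x \<in> A \<Longrightarrow> p x > 0" and q_pos: "\<And>x. x \<in> A \<Longrightarrow> q x > 0"
    and "sum p A = 1" and "sum q A = 1"
  shows "(\<Sum>x\<in>A. \<bar>p x - q x\<bar>)\<^sup>2 \<le> -8 * ln (bhattacharyya p q A)"
proof -
  define B where "B = bhattacharyya p q A"
  define a where "a x = \<bar>sqrt (p x) - sqrt (q x)\<bar>" for x
  define b where "b x = sqrt (p x) + sqrt (q x)" for x
  have abs_diff: "\<bar>p x - q x\<bar> = a x * b x" if "x \<in> A" for x
  proof -
    have "p x - q x = (sqrt (p x) - sqrt (q x)) * b x"
      using p_pos[OF that] q_pos[OF that] by (simp add: b_def algebra_simps)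
    thus ?thesis using p_pos[OF that] q_pos[OF that] by (simp add: a_def b_def abs_mult)
  qed
  have a_sq: "(\<Sum>x\<in>A. (a x)\<^sup>2) = 2 - 2 * B"
  proof -
    have "(\<Sum>x\<in>A. (a x)\<^sup>2) = (\<Sum>x\<in>A. p x + q x - 2 * sqrt (p x * q x))"
      using p_pos q_pos by (intro sum.cong) (auto simp: a_def power2_diff real_sqrt_mult less_imp_le)
    thus ?thesis using assms(4,5)
      by (simp add: B_def bhattacharyya_def sum.distrib sum_subtractf sum_distrib_left)
  qed
  have b_sq: "(\<Sum>x\<in>A. (b x)\<^sup>2) = 2 + 2 * B"
  proof -
    have "(\<Sum>x\<in>A. (b x)\<^sup>2) = (\<Sum>x\<in>A. p x + q x + 2 * sqrt (p x * q x))"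
      using p_pos q_pos by (intro sum.cong) (auto simp: b_def power2_sum real_sqrt_mult less_imp_le)
    thus ?thesis using assms(4,5)
      by (simp add: B_def bhattacharyya_def sum.distrib sum_distrib_left)
  qed
  have "A \<noteq> {}" using assms(4) by auto
  hence B_pos: "B > 0"
    unfolding B_def bhattacharyya_def using assms(1) p_pos q_pos by (intro sum_pos) auto
  have B_le_1: "B \<le> 1" using a_sq sum_nonneg[of A "\<lambda>x. (a x)\<^sup>2"] by simp
  have "(\<Sum>x\<in>A. \<bar>p x - q x\<bar>)\<^sup>2 = (\<Sum>x\<in>A. a x * b x)\<^sup>2"
    using abs_diff by simp
  also have "\<dots> \<le> (\<Sum>x\<in>A. (a x)\<^sup>2) * (\<Sum>x\<in>A. (b x)\<^sup>2)"
    by (rule Cauchy_Schwarz_ineq_sum)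
  also have "\<dots> = 8 * (1 - B) - 4 * (1 - B)\<^sup>2"
    unfolding a_sq b_sq by (simp add: power2_eq_square algebra_simps)
  also have "\<dots> \<le> 8 * (1 - B)" by simp
  also have "\<dots> \<le> -8 * ln B" using ln_le_minus_one[OF B_pos] by simp
  finally show ?thesis by (simp add: B_def)
qed

lemma mult_sqrt_divide:
  fixes p q :: real
  assumes "p > 0" "q \<ge> 0"
  shows "p * sqrt (q / p) = sqrt (p * q)"
  using assms by (simp add: real_sqrt_divide real_sqrt_mult field_simps)

lemma exp_half_ln:
  assumes "y > 0"
  shows "exp (ln y / 2) = sqrt y"
proof -
  have "ln y / 2 = ln (sqrt y)" using assms by (simp add: ln_sqrt)
  thus ?thesis using assms by simp
qed

lemma ln_sum_mult_weights:
  fixes f w :: "'a \<Rightarrow> real"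
  assumes "sum f A > 0" and "(\<Sum>x\<in>A. f x / sum f A * w x) > 0"
  shows "ln (\<Sum>x\<in>A. f x * w x) = ln (sum f A) + ln (\<Sum>x\<in>A. f x / sum f A * w x)"
proof -
  have "(\<Sum>x\<in>A. f x * w x) = sum f A * (\<Sum>x\<in>A. f x / sum f A * w x)"
    using assms(1) by (simp add: sum_distrib_left)
  thus ?thesis using assms by (simp add: ln_mult)
qed

lemma sum_diff_at_point:
  fixes f g :: "'a \<Rightarrow> 'b::ab_group_add"
  assumes "finite A" and "a \<in> A" and "\<And>x. x \<in> A \<Longrightarrow> x \<noteq> a \<Longrightarrow> g x = f x"
  shows "sum g A - sum f A = g a - f a"
proof -
  have "sum g (A - {a}) = sum f (A - {a})" using assms(3) by (intro sum.cong) auto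
  thus ?thesis using assms(1,2) by (simp add: sum.remove)
qed

lemma graph_ok_finite:
  assumes "graph_ok V E"
  shows "finite V" and "finite E" and "e \<in> E \<Longrightarrow> finite e"
proof -
  show "finite V" using assms by (simp add: graph_ok_def)
  moreover have "E \<subseteq> Pow V" using assms by (auto simp: graph_ok_def)
  ultimately show "finite E" by (meson finite_Pow_iff finite_subset)
  show "e \<in> E \<Longrightarrow> finite e" using assms by (auto simp: graph_ok_def intro: card_ge_0_finite)
qed

lemma mu_node_pos: "mu_node \<eta> E Ci lam i x > 0"
  unfolding mu_node_def node_pot_def by (simp add: sum_pos)

lemma sum_mu_node: "(\<Sum>x\<in>UNIV. mu_node \<eta> E Ci lam i x) = 1"
proof -
  have "(\<Sum>y\<in>UNIV. node_pot \<eta> E Ci lam i y) > 0"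
    unfolding node_pot_def by (simp add: sum_pos)
  thus ?thesis unfolding mu_node_def by (simp add: sum_divide_distrib[symmetric])
qed

lemma finite_labelings: "finite e \<Longrightarrow> finite (labelings e :: ('v \<Rightarrow> 'x::finite) set)"
  unfolding labelings_def by (intro finite_PiE) auto

lemma labelings_nonempty: "labelings e \<noteq> {}"
  by (simp add: labelings_def PiE_eq_empty_iff)

lemma const_in_labelings: "i \<in> e \<Longrightarrow> restrict (\<lambda>_. x) e \<in> {xe\<in>labelings e. xe i = x}"
  by (simp add: labelings_def)

lemma sum_edge_pot_pos:
  fixes Ce :: "'v set \<Rightarrow> ('v \<Rightarrow> 'x::finite) \<Rightarrow> real"
  assumes "finite e"
  shows "(\<Sum>ye\<in>labelings e. edge_pot \<eta> Ce lam e ye) > 0"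
  using finite_labelings[OF assms] labelings_nonempty by (intro sum_pos) (auto simp: edge_pot_def)

lemma mu_edge_pos:
  fixes xe :: "'v \<Rightarrow> 'x::finite"
  assumes "finite e"
  shows "mu_edge \<eta> Ce lam e xe > 0"
  using sum_edge_pot_pos[OF assms, of \<eta> Ce lam] unfolding mu_edge_def
  by (intro divide_pos_pos) (simp_all add: edge_pot_def)

lemma sum_labelings_by_label:
  fixes h :: "('v \<Rightarrow> 'x::finite) \<Rightarrow> real"
  assumes "finite e"
  shows "(\<Sum>xe\<in>labelings e. h xe * g (xe i))
    = (\<Sum>x\<in>UNIV. (\<Sum>xe\<in>{xe\<in>labelings e. xe i = x}. h xe) * g x)"
  using sum.group[OF finite_labelings[OF assms], of UNIV "\<lambda>xe. xe i" "\<lambda>xe. h xe * g (xe i)"]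
  by (simp add: sum_distrib_right)

lemma marg_pos:
  fixes x :: "'x::finite"
  assumes "finite e" and "i \<in> e"
  shows "marg \<eta> Ce lam e i x > 0"
  unfolding marg_def using finite_labelings[OF assms(1)] mu_edge_pos[OF assms(1)]
  by (intro sum_pos2[OF _ const_in_labelings[OF assms(2)]]) (auto intro: less_imp_le)

lemma sum_marg:
  fixes Ce :: "'v set \<Rightarrow> ('v \<Rightarrow> 'x::finite) \<Rightarrow> real"
  assumes "finite e"
  shows "(\<Sum>x\<in>UNIV. marg \<eta> Ce lam e i x) = 1"
proof -
  have "(\<Sum>x\<in>UNIV. marg \<eta> Ce lam e i x) = (\<Sum>xe\<in>labelings e. mu_edge \<eta> Ce lam e xe)"
    using sum_labelings_by_label[OF assms, of "mu_edge \<eta> Ce lam e" "\<lambda>_. 1" i]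
    by (simp add: marg_def)
  also have "\<dots> = 1"
    using sum_edge_pot_pos[OF assms, of \<eta> Ce lam] unfolding mu_edge_def
    by (simp add: sum_divide_distrib[symmetric])
  finally show ?thesis .
qed

lemma node_pot_update_block:
  assumes "finite (incident E i)" and "e \<in> incident E i"
  shows "node_pot \<eta> E Ci (lam(e := (lam e)(i := \<lambda>x. lam e i x + d x))) j x
    = (if j = i then node_pot \<eta> E Ci lam i x * exp (\<eta> * d x) else node_pot \<eta> E Ci lam j x)"
proof (cases "j = i")
  case True
  have "(\<Sum>e'\<in>incident E i. (lam(e := (lam e)(i := \<lambda>x. lam e i x + d x))) e' i x)
      = (\<Sum>e'\<in>incident E i. lam e' i x + (if e' = e then d x else 0))"
    by (intro sum.cong) auto
  also have "\<dots> = (\<Sum>e'\<in>incident E i. lam e' i x) + d x"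
    using assms by (simp add: sum.distrib)
  finally show ?thesis using True by (simp add: node_pot_def algebra_simps flip: exp_add)
next
  case False
  hence "(\<Sum>e'\<in>incident E j. (lam(e := (lam e)(i := \<lambda>x. lam e i x + d x))) e' j x)
      = (\<Sum>e'\<in>incident E j. lam e' j x)"
    by (intro sum.cong) auto
  thus ?thesis using False by (simp add: node_pot_def)
qed

lemma edge_pot_update_block:
  assumes "finite e" and "i \<in> e"
  shows "edge_pot \<eta> Ce (lam(e := (lam e)(i := \<lambda>x. lam e i x + d x))) e' xe
    = (if e' = e then edge_pot \<eta> Ce lam e xe * exp (- (\<eta> * d (xe i))) else edge_pot \<eta> Ce lam e' xe)"
proof (cases "e' = e")
  case True
  have "(\<Sum>j\<in>e. ((lam e)(i := \<lambda>x. lam e i x + d x)) j (xe j))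
      = (\<Sum>j\<in>e. lam e j (xe j) + (if j = i then d (xe i) else 0))"
    by (intro sum.cong) auto
  also have "\<dots> = (\<Sum>j\<in>e. lam e j (xe j)) + d (xe i)"
    using assms by (simp add: sum.distrib)
  finally show ?thesis using True
    by (simp add: edge_pot_def algebra_simps flip: exp_add)
next
  case False
  thus ?thesis by (simp add: edge_pot_def)
qed

lemma dualL_update_block:
  fixes Ci :: "'v \<Rightarrow> 'x::finite \<Rightarrow> real"
  assumes "graph_ok V E" and "e \<in> E" and "i \<in> e"
  shows "dualL \<eta> V E Ci Ce lam - dualL \<eta> V E Ci Ce (lam(e := (lam e)(i := \<lambda>x. lam e i x + d x)))
    = - (ln (\<Sum>x\<in>UNIV. mu_node \<eta> E Ci lam i x * exp (\<eta> * d x))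
         + ln (\<Sum>xe\<in>labelings e. mu_edge \<eta> Ce lam e xe * exp (- (\<eta> * d (xe i))))) / \<eta>"
proof -
  define lam' where "lam' = lam(e := (lam e)(i := \<lambda>x. lam e i x + d x))"
  have fin_V: "finite V" and fin_E: "finite E" and fin_e: "finite e"
    using graph_ok_finite assms by auto
  have i_V: "i \<in> V" using assms by (auto simp: graph_ok_def)
  have fin_inc: "finite (incident E i)" and e_inc: "e \<in> incident E i"
    using fin_E assms(2,3) by (auto simp: incident_def)
  have node_sum_pos: "(\<Sum>x\<in>UNIV. node_pot \<eta> E Ci lam i x) > 0"
    by (intro sum_pos) (auto simp: node_pot_def)
  have node_mean_pos: "(\<Sum>x\<in>UNIV. mu_node \<eta> E Ci lam i x * exp (\<eta> * d x)) > 0"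
    using mu_node_pos[of \<eta> E Ci lam i] by (intro sum_pos) auto
  have edge_mean_pos: "(\<Sum>xe\<in>labelings e. mu_edge \<eta> Ce lam e xe * exp (- (\<eta> * d (xe i)))) > 0"
    using mu_edge_pos[OF fin_e, of \<eta> Ce lam] finite_labelings[OF fin_e] labelings_nonempty
    by (intro sum_pos) auto
  have node_diff: "(\<Sum>j\<in>V. ln (\<Sum>x\<in>UNIV. node_pot \<eta> E Ci lam' j x))
      - (\<Sum>j\<in>V. ln (\<Sum>x\<in>UNIV. node_pot \<eta> E Ci lam j x))
      = ln (\<Sum>x\<in>UNIV. mu_node \<eta> E Ci lam i x * exp (\<eta> * d x))"
  proof -
    have "(\<Sum>j\<in>V. ln (\<Sum>x\<in>UNIV. node_pot \<eta> E Ci lam' j x))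
        - (\<Sum>j\<in>V. ln (\<Sum>x\<in>UNIV. node_pot \<eta> E Ci lam j x))
        = ln (\<Sum>x\<in>UNIV. node_pot \<eta> E Ci lam' i x) - ln (\<Sum>x\<in>UNIV. node_pot \<eta> E Ci lam i x)"
      using fin_V i_V by (intro sum_diff_at_point) (auto simp: lam'_def node_pot_update_block[OF fin_inc e_inc])
    also have "\<dots> = ln (\<Sum>x\<in>UNIV. mu_node \<eta> E Ci lam i x * exp (\<eta> * d x))"
      using ln_sum_mult_weights[of "node_pot \<eta> E Ci lam i" UNIV "\<lambda>x. exp (\<eta> * d x)"]
        node_sum_pos node_mean_pos
      by (simp add: lam'_def node_pot_update_block[OF fin_inc e_inc] mu_node_def)
    finally show ?thesis .
  qed
  have edge_diff: "(\<Sum>e'\<in>E. ln (\<Sum>xe\<in>labelings e'. edge_pot \<eta> Ce lam' e' xe))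
      - (\<Sum>e'\<in>E. ln (\<Sum>xe\<in>labelings e'. edge_pot \<eta> Ce lam e' xe))
      = ln (\<Sum>xe\<in>labelings e. mu_edge \<eta> Ce lam e xe * exp (- (\<eta> * d (xe i))))"
  proof -
    have "(\<Sum>e'\<in>E. ln (\<Sum>xe\<in>labelings e'. edge_pot \<eta> Ce lam' e' xe))
        - (\<Sum>e'\<in>E. ln (\<Sum>xe\<in>labelings e'. edge_pot \<eta> Ce lam e' xe))
        = ln (\<Sum>xe\<in>labelings e. edge_pot \<eta> Ce lam' e xe) - ln (\<Sum>xe\<in>labelings e. edge_pot \<eta> Ce lam e xe)"
      using fin_E assms(2)
      by (intro sum_diff_at_point) (auto simp: lam'_def edge_pot_update_block[OF fin_e assms(3)])
    also have "\<dots> = ln (\<Sum>xe\<in>labelings e. mu_edge \<eta> Ce lam e xe * exp (- (\<eta> * d (xe i))))"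
      using ln_sum_mult_weights[of "edge_pot \<eta> Ce lam e" "labelings e" "\<lambda>xe. exp (- (\<eta> * d (xe i)))"]
        sum_edge_pot_pos[OF fin_e, of \<eta> Ce lam] edge_mean_pos
      by (simp add: lam'_def edge_pot_update_block[OF fin_e assms(3)] mu_edge_def)
    finally show ?thesis .
  qed
  show ?thesis
    using node_diff edge_diff unfolding lam'_def[symmetric] dualL_def
    by (simp add: divide_inverse algebra_simps)
qed

lemma dualL_ratio_step:
  fixes Ci :: "'v \<Rightarrow> 'x::finite \<Rightarrow> real" and Ce :: "'v set \<Rightarrow> ('v \<Rightarrow> 'x) \<Rightarrow> real"
    and lam :: "'v set \<Rightarrow> 'v \<Rightarrow> 'x \<Rightarrow> real"
  assumes "graph_ok V E" and "\<eta> > 0" and "e \<in> E" and "i \<in> e"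
  defines "S \<equiv> marg \<eta> Ce lam e i" and "\<mu> \<equiv> mu_node \<eta> E Ci lam i"
  shows "dualL \<eta> V E Ci Ce lam
      - dualL \<eta> V E Ci Ce (lam(e := (lam e)(i := \<lambda>x. lam e i x + (1 / (2 * \<eta>)) * ln (S x / \<mu> x))))
    = - 2 * ln (bhattacharyya S \<mu> UNIV) / \<eta>"
proof -
  define d where "d x = (1 / (2 * \<eta>)) * ln (S x / \<mu> x)" for x
  have fin_e: "finite e" using graph_ok_finite assms(1,3) by blast
  have S_pos: "S x > 0" and \<mu>_pos: "\<mu> x > 0" for x
    unfolding S_def \<mu>_def using marg_pos[OF fin_e assms(4)] mu_node_pos by auto
  have exp_d: "exp (\<eta> * d x) = sqrt (S x / \<mu> x)" for x
    using exp_half_ln[of "S x / \<mu> x"] S_pos[of x] \<mu>_pos[of x] assms(2) by (simp add: d_def)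
  have exp_neg_d: "exp (- (\<eta> * d x)) = sqrt (\<mu> x / S x)" for x
    unfolding exp_minus exp_d by (simp add: real_sqrt_divide)
  have node_mean: "(\<Sum>x\<in>UNIV. \<mu> x * exp (\<eta> * d x)) = bhattacharyya S \<mu> UNIV"
    unfolding exp_d bhattacharyya_def
    using mult_sqrt_divide[OF \<mu>_pos less_imp_le[OF S_pos]] by (simp add: mult.commute)
  have "(\<Sum>xe\<in>labelings e. mu_edge \<eta> Ce lam e xe * exp (- (\<eta> * d (xe i))))
      = (\<Sum>x\<in>UNIV. S x * exp (- (\<eta> * d x)))"
    unfolding S_def marg_def by (rule sum_labelings_by_label[OF fin_e])
  also have "\<dots> = bhattacharyya S \<mu> UNIV"
    unfolding exp_neg_d bhattacharyya_def using mult_sqrt_divide[OF S_pos less_imp_le[OF \<mu>_pos]] by simp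
  finally have edge_mean:
    "(\<Sum>xe\<in>labelings e. mu_edge \<eta> Ce lam e xe * exp (- (\<eta> * d (xe i)))) = bhattacharyya S \<mu> UNIV" .
  have step_eq: "(\<lambda>x. lam e i x + (1 / (2 * \<eta>)) * ln (S x / \<mu> x)) = (\<lambda>x. lam e i x + d x)"
    by (simp add: d_def)
  show ?thesis
    unfolding step_eq dualL_update_block[OF assms(1,3,4)] \<mu>_def[symmetric] node_mean edge_mean
    by simp
qed

theorem lemma1:
  fixes V :: "'v set" and E :: "'v set set"
    and Ci :: "'v \<Rightarrow> 'x::finite \<Rightarrow> real" and Ce :: "'v set \<Rightarrow> ('v \<Rightarrow> 'x) \<Rightarrow> real"
    and lam :: "'v set \<Rightarrow> 'v \<Rightarrow> 'x \<Rightarrow> real" and \<eta> :: real and e :: "'v set" and i :: 'v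
  assumes "graph_ok V E" and "CARD('x) \<ge> 2" and "\<eta> > 0" and "e \<in> E" and "i \<in> e"
  shows "dualL \<eta> V E Ci Ce lam
         - dualL \<eta> V E Ci Ce
             (lam(e := (lam e)(i := (\<lambda>x. lam e i x
                + (1 / (2 * \<eta>)) * ln (marg \<eta> Ce lam e i x / mu_node \<eta> E Ci lam i x)))))
         \<ge> (1 / (4 * \<eta>)) * (\<Sum>x\<in>UNIV. \<bar>slack \<eta> E Ci Ce lam e i x\<bar>)\<^sup>2"
proof -
  define S where "S = marg \<eta> Ce lam e i"
  define \<mu> where "\<mu> = mu_node \<eta> E Ci lam i"
  have fin_e: "finite e" using graph_ok_finite assms(1,4) by blast
  have "(\<Sum>x\<in>UNIV. \<bar>S x - \<mu> x\<bar>)\<^sup>2 \<le> -8 * ln (bhattacharyya S \<mu> UNIV)"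
    by (rule l1_dist_sq_le_bhattacharyya)
      (simp_all add: S_def \<mu>_def marg_pos[OF fin_e assms(5)] mu_node_pos sum_marg[OF fin_e] sum_mu_node)
  hence "(1 / (4 * \<eta>)) * (\<Sum>x\<in>UNIV. \<bar>S x - \<mu> x\<bar>)\<^sup>2 \<le> (1 / (4 * \<eta>)) * (-8 * ln (bhattacharyya S \<mu> UNIV))"
    using assms(3) by (intro mult_left_mono) auto
  also have "\<dots> = - 2 * ln (bhattacharyya S \<mu> UNIV) / \<eta>"
    by simp
  also have "\<dots> = dualL \<eta> V E Ci Ce lam
         - dualL \<eta> V E Ci Ce
             (lam(e := (lam e)(i := (\<lambda>x. lam e i x + (1 / (2 * \<eta>)) * ln (S x / \<mu> x)))))"
    unfolding S_def \<mu>_def by (rule dualL_ratio_step[OF assms(1,3,4,5), symmetric])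
  finally show ?thesis
    unfolding S_def \<mu>_def slack_def .
qed

end
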